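(* Let $Y_1,\dots,Y_J\subset\mathbb{R}^M$ be nonempty cones and let $Y=Y_1+\dots+Y_J$ (Minkowski sum). Suppose $p\in\mathbb{R}^M$ supports $Y$ at $y^*\in Y$ and $y^*=\sum_{j=1}^J y_j$ with $y_j\in Y_j$ for each $j$. Let $C$ be the smallest convex cone containing $\{y_1,\dots,y_J\}$. Then $p$ supports $Y$ at every $\bar{y}\in C$.
   Context: A set $Y\subset\mathbb{R}^M$ is a cone if $y\in Y$ and $\alpha\ge 0$ imply $\alpha y\in Y$ (not necessarily convex). A vector $p$ supports a cone $Y$ at $y^*\in Y$ if $p\cdot y^*\ge p\cdot y$ for all $y\in Y$. The Minkowski sum is $Y_1+\dots+Y_J=\{\sum_j z_j: z_j\in Y_j\}$. The smallest convex cone containing $\{y_j\}$ is $\{\sum_j\alpha_j y_j:\alpha_j\ge0\}$. *)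

theory Defs
  imports "HOL-Analysis.Analysis"
begin

definition is_cone_set :: "(real ^ 'm) set \<Rightarrow> bool" where
  "is_cone_set Y \<longleftrightarrow> (\<forall>y\<in>Y. \<forall>\<alpha>::real. \<alpha> \<ge> 0 \<longrightarrow> \<alpha> *\<^sub>R y \<in> Y)"

definition supports :: "real ^ 'm \<Rightarrow> (real ^ 'm) set \<Rightarrow> real ^ 'm \<Rightarrow> bool" where
  "supports p Y ys \<longleftrightarrow> ys \<in> Y \<and> (\<forall>y\<in>Y. p \<bullet> ys \<ge> p \<bullet> y)"

text \<open>Minkowski sum Y_1 + ... + Y_J of a family indexed by j < J (0-based).\<close>
definition minkowski_sum :: "nat \<Rightarrow> (nat \<Rightarrow> (real ^ 'm) set) \<Rightarrow> (real ^ 'm) set" where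
  "minkowski_sum J Ys = {\<Sum>j<J. z j | z. \<forall>j<J. z j \<in> Ys j}"

text \<open>Smallest convex cone containing y_1,...,y_J.\<close>
definition gen_convex_cone :: "nat \<Rightarrow> (nat \<Rightarrow> real ^ 'm) \<Rightarrow> (real ^ 'm) set" where
  "gen_convex_cone J ys = {\<Sum>j<J. \<alpha> j *\<^sub>R ys j | \<alpha>. \<forall>j<J. \<alpha> j \<ge> 0}"

end

theory Submission
  imports Defs
begin

(* Since Y is a cone, a supporting p must satisfy p \<bullet> y* = 0 and p \<bullet> y \<le> 0 on Y
  (scale y* by 0 and by 2). Each y\<^sub>j lies in Y (pad it with zeros from the other cones),
  so the nonpositive numbers p \<bullet> y\<^sub>j sum to p \<bullet> y* = 0 and all vanish. Hence p \<bullet> y = 0 on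
  the convex cone C generated by the y\<^sub>j, and C \<subseteq> Y because \<alpha>\<^sub>j y\<^sub>j \<in> Y\<^sub>j. *)

lemma is_cone_setD:
  "is_cone_set Y \<Longrightarrow> y \<in> Y \<Longrightarrow> 0 \<le> a \<Longrightarrow> a *\<^sub>R y \<in> Y"
  unfolding is_cone_set_def by blast

lemma zero_mem_is_cone_set:
  assumes "is_cone_set Y" and "Y \<noteq> {}"
  shows "0 \<in> Y"
proof -
  from \<open>Y \<noteq> {}\<close> obtain y where "y \<in> Y" by blast
  from is_cone_setD[OF assms(1) this, of 0] show ?thesis by simp
qed

lemma supports_cone_iff:
  assumes "is_cone_set Y"
  shows "supports p Y y \<longleftrightarrow> y \<in> Y \<and> p \<bullet> y = 0 \<and> (\<forall>x\<in>Y. p \<bullet> x \<le> 0)"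
proof
  assume supp: "supports p Y y"
  then have "y \<in> Y" and max: "\<And>x. x \<in> Y \<Longrightarrow> p \<bullet> x \<le> p \<bullet> y"
    unfolding supports_def by auto
  have "p \<bullet> (0 *\<^sub>R y) \<le> p \<bullet> y" and "p \<bullet> (2 *\<^sub>R y) \<le> p \<bullet> y"
    by (rule max, rule is_cone_setD[OF assms \<open>y \<in> Y\<close>], simp)+
  then have "p \<bullet> y = 0" by simp
  with \<open>y \<in> Y\<close> max show "y \<in> Y \<and> p \<bullet> y = 0 \<and> (\<forall>x\<in>Y. p \<bullet> x \<le> 0)" by simp
qed (auto simp: supports_def)

lemma sum_mem_minkowski_sum:
  "(\<And>j. j < J \<Longrightarrow> z j \<in> Ys j) \<Longrightarrow> (\<Sum>j<J. z j) \<in> minkowski_sum J Ys"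
  unfolding minkowski_sum_def by blast

lemma is_cone_set_minkowski_sum:
  assumes "\<And>j. j < J \<Longrightarrow> is_cone_set (Ys j)"
  shows "is_cone_set (minkowski_sum J Ys)"
  unfolding is_cone_set_def
proof (intro ballI allI impI)
  fix y and a :: real
  assume "y \<in> minkowski_sum J Ys" and "0 \<le> a"
  then obtain z where z: "\<And>j. j < J \<Longrightarrow> z j \<in> Ys j" and y: "y = (\<Sum>j<J. z j)"
    unfolding minkowski_sum_def by blast
  have "(\<Sum>j<J. a *\<^sub>R z j) \<in> minkowski_sum J Ys"
    using is_cone_setD[OF assms z \<open>0 \<le> a\<close>] by (rule sum_mem_minkowski_sum)
  then show "a *\<^sub>R y \<in> minkowski_sum J Ys"
    by (simp add: y scaleR_sum_right)
qed

lemma summand_mem_minkowski_sum: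
  assumes "\<And>i. i < J \<Longrightarrow> 0 \<in> Ys i" and "j < J" and "x \<in> Ys j"
  shows "x \<in> minkowski_sum J Ys"
proof -
  have "(\<Sum>i<J. if i = j then x else 0) \<in> minkowski_sum J Ys"
    by (rule sum_mem_minkowski_sum) (simp add: assms)
  with \<open>j < J\<close> show ?thesis by simp
qed

lemma gen_convex_cone_subset_minkowski_sum:
  assumes "\<And>j. j < J \<Longrightarrow> is_cone_set (Ys j)" and "\<And>j. j < J \<Longrightarrow> ys j \<in> Ys j"
  shows "gen_convex_cone J ys \<subseteq> minkowski_sum J Ys"
proof
  fix y assume "y \<in> gen_convex_cone J ys"
  then obtain \<alpha> where "\<And>j. j < J \<Longrightarrow> 0 \<le> \<alpha> j" and "y = (\<Sum>j<J. \<alpha> j *\<^sub>R ys j)"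
    unfolding gen_convex_cone_def by blast
  with is_cone_setD[OF assms] show "y \<in> minkowski_sum J Ys"
    by (simp add: sum_mem_minkowski_sum)
qed

lemma inner_gen_convex_cone_eq_0:
  assumes "\<And>j. j < J \<Longrightarrow> p \<bullet> ys j = 0" and "y \<in> gen_convex_cone J ys"
  shows "p \<bullet> y = 0"
  using assms unfolding gen_convex_cone_def by (auto simp: inner_sum_right)

theorem lemma4:
  fixes J :: nat and Ys :: "nat \<Rightarrow> (real ^ 'm) set"
    and p ystar :: "real ^ 'm" and ys :: "nat \<Rightarrow> real ^ 'm"
  assumes cones: "\<And>j. j < J \<Longrightarrow> is_cone_set (Ys j)"
    and nonempty: "\<And>j. j < J \<Longrightarrow> Ys j \<noteq> {}"
    and supp: "supports p (minkowski_sum J Ys) ystar"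
    and decomp: "ystar = (\<Sum>j<J. ys j)"
    and mem: "\<And>j. j < J \<Longrightarrow> ys j \<in> Ys j"
  shows "\<forall>ybar \<in> gen_convex_cone J ys. supports p (minkowski_sum J Ys) ybar"
proof -
  let ?Y = "minkowski_sum J Ys"
  note supp_iff = supports_cone_iff[OF is_cone_set_minkowski_sum[of J Ys, OF cones]]
  have "p \<bullet> ystar = 0" and nonpos: "\<And>y. y \<in> ?Y \<Longrightarrow> p \<bullet> y \<le> 0"
    using supp by (simp_all add: supp_iff)
  have zero_mem: "0 \<in> Ys j" if "j < J" for j
    using zero_mem_is_cone_set[OF cones nonempty] that by simp
  have ys_nonpos: "p \<bullet> ys j \<le> 0" if "j < J" for j
    by (intro nonpos summand_mem_minkowski_sum[where Ys = Ys, OF zero_mem that mem[OF that]])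
  have "(\<Sum>j<J. - (p \<bullet> ys j)) = 0"
    using \<open>p \<bullet> ystar = 0\<close> by (simp add: decomp inner_sum_right sum_negf)
  then have ys_orth: "p \<bullet> ys j = 0" if "j < J" for j
    using sum_nonneg_eq_0_iff[of "{..<J}" "\<lambda>j. - (p \<bullet> ys j)"] ys_nonpos that by auto
  show ?thesis
  proof
    fix ybar assume "ybar \<in> gen_convex_cone J ys"
    then have "ybar \<in> ?Y" and "p \<bullet> ybar = 0"
      using gen_convex_cone_subset_minkowski_sum[of J Ys ys, OF cones mem]
        inner_gen_convex_cone_eq_0[of J p ys, OF ys_orth] by auto
    with nonpos show "supports p ?Y ybar"
      by (simp add: supp_iff)
  qed
qed

end
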